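(* Let $\mathcal{G}=(\mathcal{V},\mathcal{E})$ be a strongly endotactic reaction network in $\mathbb{R}^2$ whose stoichiometric subspace is two-dimensional, and assume that all source complexes of $\mathcal{G}$ lie on the boundary of the convex hull of the set of source complexes. Then there exists a weakly reversible reaction network $\tilde{\mathcal{G}}$ such that $\mathcal{G}\sqsubseteq\tilde{\mathcal{G}}$. Consequently, every two-dimensional strongly endotactic network is effectively extremally weakly reversible.
   Context: A reaction network (E-graph) $\mathcal{G}=(\mathcal{V},\mathcal{E})$ is a finite directed graph whose nodes are distinct elements of a finite set $Y\subset\mathbb{R}^d_{\ge 0}$, with $\mathcal{V}\neq\emptyset$, every node incident to at least one edge, and no edge from a node to itself. For an edge $e$, $\mathbf{s}(e)$ is its source node, $\mathbf{t}(e)$ its target, $\mathbf{v}(e)=\mathbf{t}(e)-\mathbf{s}(e)$; the stoichiometric subspace is $\mathrm{span}\{\mathbf{v}(e):e\in\mathcal{E}\}$; source complexes are $\mathcal{SC}_{\mathcal{G}}=\{\mathbf{s}(e):e\in\mathcal{E}\}$. Given positive rate constants $\mathcal{K}=(k_e)$, $\mathcal{G}$ generates $\mathbf{f}_{\mathcal{G}(\mathcal{K})}(\mathbf{x})=\sum_e k_e\mathbf{x}^{\mathbf{s}(e)}\mathbf{v}(e)$ ($\mathbf{x}^{\mathbf{y}}=\prod_i x_i^{y_i}$, $0^0=1$). $\mathcal{G}\sqsubseteq\tilde{\mathcal{G}}$ means: for every positive rate constants $\mathcal{K}$ for $\mathcal{G}$ there exist positive rate constants $\tilde{\mathcal{K}}$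 for $\tilde{\mathcal{G}}$ with $\mathbf{f}_{\tilde{\mathcal{G}}(\tilde{\mathcal{K}})}=\mathbf{f}_{\mathcal{G}(\mathcal{K})}$ identically. $\mathcal{G}$ is weakly reversible if every edge lies in a directed cycle. $\mathcal{G}$ is strongly endotactic if for every $\mathbf{w}\in\mathbb{R}^d$ and $e_i\in\mathcal{E}$ with $\mathbf{w}\cdot\mathbf{v}(e_i)<0$ there exists $e_j\in\mathcal{E}$ with $\mathbf{w}\cdot(\mathbf{s}(e_j)-\mathbf{s}(e_i))<0$, $\mathbf{w}\cdot\mathbf{v}(e_j)>0$, and $\mathbf{w}\cdot(\mathbf{s}(e_j)-\mathbf{s}(e_k))\le 0$ for all $e_k\in\mathcal{E}$. The extreme source complexes $\mathcal{EC}_{\mathcal{G}}$ are the source complexes on the boundary of the convex hull of $\mathcal{SC}_{\mathcal{G}}$; the extremal reaction set is $\mathcal{EE}_{\mathcal{G}}=\{e\in\mathcal{E}:\mathbf{s}(e)\in\mathcal{EC}_{\mathcal{G}}\}$, and $\mathcal{EV}_{\mathcal{G}}$ is the set of sources and targets of edges in $\mathcal{EE}_{\mathcal{G}}$. $\mathcal{G}$ is extremally weakly reversible if the network $(\mathcal{EV}_{\mathcal{G}},\mathcal{EE}_{\mathcal{G}})$ is weakly reversible. A polynomial system is extremally weakly reversible if it is generated by some extremally weakly reversible network, and a network is effectively extremally weakly reversible if every system it generates (for any positive rate constants) is extremally weakly reversible. *)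

theory Defs
  imports "HOL-Analysis.Analysis"
begin

text \<open>Complexes are vectors in R^n (type real^'n). A reaction network (E-graph) is
  represented by its finite set of edges E (pairs (source, target)); its node set
  is the set of all sources and targets.\<close>

type_synonym ('n) reaction = "(real^('n::finite)) \<times> (real^'n)"

definition nonneg_vec :: "real^('n::finite) \<Rightarrow> bool" where
  "nonneg_vec x \<longleftrightarrow> (\<forall>i. x $ i \<ge> 0)"

definition nodes :: "('n::finite) reaction set \<Rightarrow> (real^'n) set" where
  "nodes E = fst ` E \<union> snd ` E"

definition reaction_network :: "('n::finite) reaction set \<Rightarrow> bool" where
  "reaction_network E \<longleftrightarrow> finite E \<and> E \<noteq> {} \<and>
     (\<forall>e\<in>E. fst e \<noteq> snd e \<and> nonneg_vec (fst e) \<and> nonneg_vec (snd e))"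

definition rvec :: "('n::finite) reaction \<Rightarrow> real^'n" where
  "rvec e = snd e - fst e"

definition stoich_subspace :: "('n::finite) reaction set \<Rightarrow> (real^'n) set" where
  "stoich_subspace E = span (rvec ` E)"

definition source_complexes :: "('n::finite) reaction set \<Rightarrow> (real^'n) set" where
  "source_complexes E = fst ` E"

text \<open>Monomial x^y with the convention 0^0 = 1.\<close>
definition monom :: "real^('n::finite) \<Rightarrow> real^'n \<Rightarrow> real" where
  "monom x y = (\<Prod>i\<in>UNIV. (if y $ i = 0 then 1 else x $ i powr y $ i))"

definition rate_constants :: "('n::finite) reaction set \<Rightarrow> ('n reaction \<Rightarrow> real) \<Rightarrow> bool" where
  "rate_constants E K \<longleftrightarrow> (\<forall>e\<in>E. K e > 0)"

definition gen_system :: "('n::finite) reaction set \<Rightarrow> ('n reaction \<Rightarrow> real) \<Rightarrow> real^'n \<Rightarrow> real^'n" where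
  "gen_system E K x = (\<Sum>e\<in>E. (K e * monom x (fst e)) *\<^sub>R rvec e)"

text \<open>Dynamical equivalence/inclusion G \<sqsubseteq> G' (systems compared on the nonnegative orthant).\<close>
definition realized_by :: "('n::finite) reaction set \<Rightarrow> 'n reaction set \<Rightarrow> bool" where
  "realized_by E E' \<longleftrightarrow> (\<forall>K. rate_constants E K \<longrightarrow>
      (\<exists>K'. rate_constants E' K' \<and>
         (\<forall>x. nonneg_vec x \<longrightarrow> gen_system E' K' x = gen_system E K x)))"

definition weakly_reversible :: "('n::finite) reaction set \<Rightarrow> bool" where
  "weakly_reversible E \<longleftrightarrow> (\<forall>e\<in>E. (snd e, fst e) \<in> E\<^sup>*)"

definition strongly_endotactic :: "('n::finite) reaction set \<Rightarrow> bool" where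
  "strongly_endotactic E \<longleftrightarrow>
    (\<forall>w ei. ei \<in> E \<and> w \<bullet> rvec ei < 0 \<longrightarrow>
       (\<exists>ej\<in>E. w \<bullet> (fst ej - fst ei) < 0 \<and> w \<bullet> rvec ej > 0 \<and>
                (\<forall>ek\<in>E. w \<bullet> (fst ej - fst ek) \<le> 0)))"

definition extreme_complexes :: "('n::finite) reaction set \<Rightarrow> (real^'n) set" where
  "extreme_complexes E = source_complexes E \<inter> frontier (convex hull (source_complexes E))"

definition extremal_reactions :: "('n::finite) reaction set \<Rightarrow> 'n reaction set" where
  "extremal_reactions E = {e\<in>E. fst e \<in> extreme_complexes E}"

text \<open>The network (EV, EE) is weakly reversible; its node set EV is just the
  set of endpoints of EE, so this is weak reversibility of the edge set EE.\<close>
definition extremally_weakly_reversible :: "('n::finite) reaction set \<Rightarrow> bool" where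
  "extremally_weakly_reversible E \<longleftrightarrow> weakly_reversible (extremal_reactions E)"

definition system_extremally_wr :: "(real^('n::finite) \<Rightarrow> real^'n) \<Rightarrow> bool" where
  "system_extremally_wr f \<longleftrightarrow> (\<exists>E K. reaction_network E \<and> rate_constants E K \<and>
      extremally_weakly_reversible E \<and> (\<forall>x. nonneg_vec x \<longrightarrow> gen_system E K x = f x))"

definition effectively_extremally_wr :: "('n::finite) reaction set \<Rightarrow> bool" where
  "effectively_extremally_wr E \<longleftrightarrow>
     (\<forall>K. rate_constants E K \<longrightarrow> system_extremally_wr (gen_system E K))"

end

(* For positive rate constants K and an extreme source complex b, strong endotacticity and
   Farkas' lemma put the net reaction vector of b into the cone generated by the vectors c - b,
   c extreme.  Replacing the reactions out of b by reactions b -> c, weighted by a conic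
   decomposition that uses every c occurring in some decomposition, leaves the generated system
   unchanged, and the new reactions do not depend on K.  In the plane the new network on the
   extreme complexes is strongly connected: if a set X of extreme complexes were closed under it
   but missed some complex, every point of X would have a supporting direction orthogonal to its
   net vector whose face lies in X; walking from face to face these directions turn monotonically
   and eventually sweep all directions, so every extreme complex lies in X.  Reactions out of
   non-extreme sources are kept unchanged. *)

theory Submission
  imports Defs
begin

section \<open>Planar cross product\<close>

definition cross2 :: "real^2 \<Rightarrow> real^2 \<Rightarrow> real" where
  "cross2 a b = a$1 * b$2 - a$2 * b$1"

lemma inner_vec2: "(a::real^2) \<bullet> b = a$1 * b$1 + a$2 * b$2"
  by (simp add: inner_vec_def sum_2)

lemma vec2_eqI: "(x::real^2)$1 = y$1 \<Longrightarrow> x$2 = y$2 \<Longrightarrow> x = y"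
  by (simp add: vec_eq_iff forall_2)

lemma cross2_self [simp]: "cross2 a a = 0"
  by (simp add: cross2_def)

lemma cross2_antisym: "cross2 a b = - cross2 b a"
  by (simp add: cross2_def)

lemma cross2_scaleR_left [simp]: "cross2 (c *\<^sub>R a) b = c * cross2 a b"
  and cross2_scaleR_right [simp]: "cross2 a (c *\<^sub>R b) = c * cross2 a b"
  by (simp_all add: cross2_def algebra_simps)

lemma cross2_cramer: "cross2 a b *\<^sub>R x = cross2 x b *\<^sub>R a + cross2 a x *\<^sub>R b"
  by (rule vec2_eqI) (simp_all add: cross2_def algebra_simps)

lemma cross2_lagrange: "(a \<bullet> a) * (b \<bullet> d) = (a \<bullet> b) * (a \<bullet> d) + cross2 a b * cross2 a d"
  unfolding inner_vec2 cross2_def by (simp add: algebra_simps)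

lemma cross2_inner_identity:
  "(z \<bullet> u) * cross2 z v - (z \<bullet> v) * cross2 z u = (z \<bullet> z) * cross2 u v"
  unfolding inner_vec2 cross2_def by (simp add: algebra_simps)

lemma cross2_eq_0_imp_parallel:
  assumes "cross2 a b = 0"
  shows "(a \<bullet> a) *\<^sub>R b = (a \<bullet> b) *\<^sub>R a"
proof -
  have "(a \<bullet> a) * b$1 - (a \<bullet> b) * a$1 = - a$2 * cross2 a b"
    and "(a \<bullet> a) * b$2 - (a \<bullet> b) * a$2 = a$1 * cross2 a b"
    unfolding inner_vec2 cross2_def by (simp_all add: algebra_simps)
  then show ?thesis
    using assms by (intro vec2_eqI) auto
qed

lemma cross2_eq_0_imp_multiple:
  assumes "cross2 a z = 0" "a \<noteq> 0"
  shows "z = ((a \<bullet> z) / (a \<bullet> a)) *\<^sub>R a"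
proof -
  have "z = inverse (a \<bullet> a) *\<^sub>R ((a \<bullet> a) *\<^sub>R z)"
    using assms(2) by simp
  also have "\<dots> = ((a \<bullet> z) / (a \<bullet> a)) *\<^sub>R a"
    using cross2_eq_0_imp_parallel[OF assms(1)] by (simp add: divide_inverse mult.commute)
  finally show ?thesis .
qed

lemma cross2_eq_0_if_orthogonal:
  assumes "a \<bullet> d = 0" "b \<bullet> d = 0" "d \<noteq> 0"
  shows "cross2 a b = 0"
proof -
  have "cross2 a b * d$1 = b$2 * (a \<bullet> d) - a$2 * (b \<bullet> d)"
    and "cross2 a b * d$2 = a$1 * (b \<bullet> d) - b$1 * (a \<bullet> d)"
    unfolding inner_vec2 cross2_def by (simp_all add: algebra_simps)
  moreover have "d$1 \<noteq> 0 \<or> d$2 \<noteq> 0"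
    using assms(3) vec2_eqI[of d 0] by auto
  ultimately show ?thesis
    using assms(1,2) by auto
qed

lemma cross2_neq_0I:
  assumes "a \<bullet> m \<noteq> 0" "b \<bullet> m = 0" "b \<noteq> 0"
  shows "cross2 a b \<noteq> 0"
proof
  assume "cross2 a b = 0"
  then have "(b \<bullet> b) *\<^sub>R a = (b \<bullet> a) *\<^sub>R b"
    by (intro cross2_eq_0_imp_parallel) (simp add: cross2_antisym[of b a])
  from arg_cong[OF this, of "\<lambda>v. v \<bullet> m"] have "(b \<bullet> b) * (a \<bullet> m) = 0"
    using assms(2) by simp
  then show False
    using assms(1,3) by simp
qed

lemma cross2_consecutive_same_sign:
  assumes "w1 \<noteq> 0" "w1 \<bullet> d = 0" "0 < w0 \<bullet> d" "w2 \<bullet> d < 0"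
  shows "0 < cross2 w0 w1 * cross2 w1 w2"
proof -
  define q where "q = cross2 w1 d"
  have w1: "0 < w1 \<bullet> w1"
    using assms(1) by simp
  have "(w1 \<bullet> w1) * (w0 \<bullet> d) = - cross2 w0 w1 * q"
    and "(w1 \<bullet> w1) * (w2 \<bullet> d) = cross2 w1 w2 * q"
    using cross2_lagrange[of w1 _ d] assms(2) by (simp_all add: q_def cross2_antisym[of w1 w0])
  moreover have "0 < (w1 \<bullet> w1) * (w0 \<bullet> d)" "(w1 \<bullet> w1) * (w2 \<bullet> d) < 0"
    using w1 assms(3,4) by (simp_all add: mult_pos_neg)
  ultimately have "cross2 w0 w1 * q < 0" "cross2 w1 w2 * q < 0"
    by simp_all
  then have "0 < (cross2 w0 w1 * q) * (cross2 w1 w2 * q)"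
    by (rule mult_neg_neg)
  then have "0 < (cross2 w0 w1 * cross2 w1 w2) * (q * q)"
    by (simp only: mult_ac)
  then show ?thesis
    by (simp add: zero_less_mult_iff)
qed

section \<open>Cones generated by finitely many points\<close>

definition conic_coeffs :: "'a::real_vector set \<Rightarrow> 'a \<Rightarrow> 'a \<Rightarrow> ('a \<Rightarrow> real) \<Rightarrow> bool" where
  "conic_coeffs B b x l \<longleftrightarrow> (\<forall>c. 0 \<le> l c) \<and> x = (\<Sum>c\<in>B. l c *\<^sub>R (c - b))"

definition cone_at :: "'a::real_vector set \<Rightarrow> 'a \<Rightarrow> 'a set" where
  "cone_at B b = {x. \<exists>l. conic_coeffs B b x l}"

definition conic_support :: "'a::real_vector set \<Rightarrow> 'a \<Rightarrow> 'a \<Rightarrow> 'a \<Rightarrow> bool" where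
  "conic_support B b x c \<longleftrightarrow> (\<exists>l. conic_coeffs B b x l \<and> 0 < l c)"

lemma conic_coeffs_zero: "conic_coeffs B b 0 (\<lambda>c. 0)"
  by (simp add: conic_coeffs_def)

lemma conic_coeffs_add:
  "conic_coeffs B b x l \<Longrightarrow> conic_coeffs B b y m \<Longrightarrow> conic_coeffs B b (x + y) (\<lambda>c. l c + m c)"
  by (simp add: conic_coeffs_def scaleR_add_left sum.distrib)

lemma conic_coeffs_scaleR:
  "0 \<le> t \<Longrightarrow> conic_coeffs B b x l \<Longrightarrow> conic_coeffs B b (t *\<^sub>R x) (\<lambda>c. t * l c)"
  by (simp add: conic_coeffs_def scaleR_sum_right)

lemma conic_coeffs_sum:
  assumes "finite I" "\<And>i. i \<in> I \<Longrightarrow> conic_coeffs B b (x i) (L i)"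
  shows "conic_coeffs B b (\<Sum>i\<in>I. x i) (\<lambda>c. \<Sum>i\<in>I. L i c)"
  using assms
proof (induction I rule: finite_induct)
  case (insert i F)
  then have "conic_coeffs B b (x i + (\<Sum>i\<in>F. x i)) (\<lambda>c. L i c + (\<Sum>i\<in>F. L i c))"
    by (intro conic_coeffs_add) auto
  then show ?case
    using insert.hyps by simp
qed (simp add: conic_coeffs_zero)

lemma conic_coeffs_generator:
  assumes "finite B" "c \<in> B"
  shows "conic_coeffs B b (c - b) (\<lambda>c'. if c' = c then 1 else 0)"
  using assms by (simp add: conic_coeffs_def if_distrib[of "\<lambda>t. t *\<^sub>R _"] sum.delta' cong: if_cong)

lemma convex_cone_cone_at: "convex_cone (cone_at B b)"
  unfolding convex_cone_iff cone_at_def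
  using conic_coeffs_zero conic_coeffs_add conic_coeffs_scaleR by blast

lemma cone_at_generator: "finite B \<Longrightarrow> c \<in> B \<Longrightarrow> c - b \<in> cone_at B b"
  unfolding cone_at_def using conic_coeffs_generator by blast

lemma cone_at_eq_convex_cone_hull:
  assumes "finite B"
  shows "cone_at B b = convex_cone hull ((\<lambda>c. c - b) ` B)"
proof
  have "(\<Sum>c\<in>B'. l c *\<^sub>R (c - b)) \<in> convex_cone hull ((\<lambda>c. c - b) ` B)"
    if "\<forall>c. 0 \<le> l c" "B' \<subseteq> B" for l B'
    using finite_subset[OF \<open>B' \<subseteq> B\<close> assms] \<open>B' \<subseteq> B\<close>
  proof (induction B')
    case empty
    then show ?case
      by (simp add: convex_cone_hull_contains_0)
  next
    case (insert c F)
    then have "l c *\<^sub>R (c - b) \<in> convex_cone hull ((\<lambda>c. c - b) ` B)"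
      using that(1) by (intro convex_cone_hull_mul hull_inc) auto
    then show ?case
      using insert by (simp add: convex_cone_hull_add)
  qed
  then show "cone_at B b \<subseteq> convex_cone hull ((\<lambda>c. c - b) ` B)"
    unfolding cone_at_def conic_coeffs_def by blast
next
  show "convex_cone hull ((\<lambda>c. c - b) ` B) \<subseteq> cone_at B b"
    using convex_cone_cone_at cone_at_generator[OF assms]
    by (intro hull_minimal) (auto simp: convex_cone_def)
qed

lemma closed_cone_at:
  fixes B :: "'a::euclidean_space set"
  shows "finite B \<Longrightarrow> closed (cone_at B b)"
  by (simp add: cone_at_eq_convex_cone_hull closed_convex_cone_hull)

lemma cone_at_separation:
  fixes B :: "'a::euclidean_space set"
  assumes "finite B" "x \<notin> cone_at B b"
  shows "\<exists>w. w \<bullet> x < 0 \<and> (\<forall>c\<in>B. 0 \<le> w \<bullet> (c - b))"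
proof -
  have cone: "convex_cone (cone_at B b)"
    by (rule convex_cone_cone_at)
  obtain a \<beta> where a: "a \<bullet> x < \<beta>" "\<forall>y\<in>cone_at B b. \<beta> < a \<bullet> y"
    using separating_hyperplane_closed_point[OF _ closed_cone_at[OF assms(1)] assms(2)] cone
    by (auto simp: convex_cone_def)
  have "\<beta> < 0"
    using a(2) cone by (auto simp: convex_cone_iff)
  have "0 \<le> a \<bullet> (c - b)" if "c \<in> B" for c
  proof (rule ccontr)
    assume neg: "\<not> 0 \<le> a \<bullet> (c - b)"
    define t where "t = \<beta> / (a \<bullet> (c - b))"
    have "0 \<le> t"
      using neg \<open>\<beta> < 0\<close> by (simp add: t_def divide_nonpos_neg)
    then have "t *\<^sub>R (c - b) \<in> cone_at B b"
      using convex_cone_scaleR[OF cone _ cone_at_generator[OF assms(1) that, of b]] by blast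
    then have "\<beta> < a \<bullet> (t *\<^sub>R (c - b))"
      using a(2) by blast
    moreover have "a \<bullet> (t *\<^sub>R (c - b)) = \<beta>"
      using neg by (simp add: t_def)
    ultimately show False
      by simp
  qed
  then show ?thesis
    using a(1) \<open>\<beta> < 0\<close> by (intro exI[of _ a]) auto
qed

lemma conic_supportI:
  assumes "finite B" "c \<in> B" "0 < t" "x - t *\<^sub>R (c - b) \<in> cone_at B b"
  shows "conic_support B b x c"
proof -
  obtain l where "conic_coeffs B b (x - t *\<^sub>R (c - b)) l"
    using assms(4) unfolding cone_at_def by blast
  moreover have "conic_coeffs B b (t *\<^sub>R (c - b)) (\<lambda>c'. t * (if c' = c then 1 else 0))"
    using assms(3) conic_coeffs_generator[OF assms(1,2)] by (intro conic_coeffs_scaleR) auto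
  ultimately have "conic_coeffs B b x (\<lambda>c'. l c' + t * (if c' = c then 1 else 0))"
    using conic_coeffs_add by fastforce
  moreover have "0 < l c + t * (if c = c then 1 else 0)"
    using \<open>conic_coeffs B b (x - t *\<^sub>R (c - b)) l\<close> assms(3)
    by (simp add: conic_coeffs_def add_nonneg_pos)
  ultimately show ?thesis
    unfolding conic_support_def by blast
qed

lemma conic_support_orthogonal:
  fixes B :: "'a::real_inner set"
  assumes "finite B" "conic_support B b x c" "c \<in> B"
    and "\<forall>c'\<in>B. 0 \<le> w \<bullet> (c' - b)" "w \<bullet> x = 0"
  shows "w \<bullet> (c - b) = 0"
proof -
  obtain l where l: "\<forall>c. 0 \<le> l c" "x = (\<Sum>c\<in>B. l c *\<^sub>R (c - b))" "0 < l c"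
    using assms(2) unfolding conic_support_def conic_coeffs_def by blast
  have "(\<Sum>c'\<in>B. l c' * (w \<bullet> (c' - b))) = 0"
    using assms(5) by (simp add: l(2) inner_sum_right)
  moreover have "\<forall>c'\<in>B. 0 \<le> l c' * (w \<bullet> (c' - b))"
    using assms(4) l(1) by simp
  ultimately have "\<forall>c'\<in>B. l c' * (w \<bullet> (c' - b)) = 0"
    using sum_nonneg_eq_0_iff[OF assms(1), of "\<lambda>c'. l c' * (w \<bullet> (c' - b))"] by simp
  then have "l c * (w \<bullet> (c - b)) = 0"
    using assms(3) by simp
  then show ?thesis
    using l(3) by simp
qed

lemma conic_coeffs_exact_support:
  assumes "finite B" "x \<in> cone_at B b"
  shows "\<exists>l. conic_coeffs B b x l \<and> (\<forall>c\<in>B. 0 < l c \<longleftrightarrow> conic_support B b x c)"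
proof -
  define U where "U = {c\<in>B. conic_support B b x c}"
  obtain l0 where l0: "conic_coeffs B b x l0"
    using assms(2) unfolding cone_at_def by blast
  have "\<forall>c\<in>U. \<exists>l. conic_coeffs B b x l \<and> 0 < l c"
    by (simp add: U_def conic_support_def)
  then obtain L where L: "\<And>c. c \<in> U \<Longrightarrow> conic_coeffs B b x (L c)" "\<And>c. c \<in> U \<Longrightarrow> 0 < L c c"
    by metis
  define m where "m = 1 + real (card U)"
  define l where "l c' = (1 / m) * (l0 c' + (\<Sum>c\<in>U. L c c'))" for c'
  have "finite U"
    using assms(1) by (simp add: U_def)
  then have "conic_coeffs B b ((1 / m) *\<^sub>R (x + (\<Sum>c\<in>U. x))) l"
    unfolding l_def using l0 L(1) m_def
    by (intro conic_coeffs_scaleR conic_coeffs_add conic_coeffs_sum) auto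
  moreover have "x + (\<Sum>c\<in>U. x) = m *\<^sub>R x"
    by (simp add: m_def sum_constant_scaleR scaleR_add_left)
  then have "(1 / m) *\<^sub>R (x + (\<Sum>c\<in>U. x)) = x"
    by (simp add: m_def add_pos_nonneg)
  ultimately have coeffs: "conic_coeffs B b x l"
    by simp
  have L_nonneg: "0 \<le> L c' c" if "c' \<in> U" for c' c
    using L(1)[OF that] by (simp add: conic_coeffs_def)
  have support: "0 < l c \<longleftrightarrow> conic_support B b x c" if "c \<in> B" for c
  proof -
    have "0 \<le> l0 c" "0 \<le> (\<Sum>c'\<in>U. L c' c)"
      using l0 L_nonneg by (simp_all add: conic_coeffs_def sum_nonneg)
    then have "0 < l c \<longleftrightarrow> 0 < l0 c \<or> 0 < (\<Sum>c'\<in>U. L c' c)"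
      by (simp add: l_def m_def zero_less_divide_iff add_pos_nonneg) arith
    also have "0 < (\<Sum>c'\<in>U. L c' c) \<longleftrightarrow> (\<exists>c'\<in>U. 0 < L c' c)"
    proof
      assume "0 < (\<Sum>c'\<in>U. L c' c)"
      moreover have "(\<Sum>c'\<in>U. L c' c) \<le> 0" if "\<not> (\<exists>c'\<in>U. 0 < L c' c)"
        using that by (intro sum_nonpos) (auto simp: not_less)
      ultimately show "\<exists>c'\<in>U. 0 < L c' c"
        by (meson not_le)
    next
      assume "\<exists>c'\<in>U. 0 < L c' c"
      then show "0 < (\<Sum>c'\<in>U. L c' c)"
        using \<open>finite U\<close> L_nonneg by (auto intro: sum_pos2)
    qed
    also have "0 < l0 c \<or> (\<exists>c'\<in>U. 0 < L c' c) \<longleftrightarrow> conic_support B b x c"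
      using l0 L that unfolding U_def conic_support_def by auto
    finally show ?thesis .
  qed
  show ?thesis
    using coeffs support by blast
qed

lemma convex_cone_diff_small_multiple:
  assumes "convex_cone C" "x \<in> C" "h \<in> C" "g = a *\<^sub>R x + \<beta> *\<^sub>R h" "\<beta> \<le> 0"
  shows "\<exists>t>0. x - t *\<^sub>R g \<in> C"
proof -
  define t where "t = 1 / (1 + \<bar>a\<bar>)"
  have "0 < t"
    by (simp add: t_def add_pos_nonneg)
  have "t * a \<le> t * \<bar>a\<bar>"
    using \<open>0 < t\<close> by (intro mult_left_mono) auto
  also have "t * \<bar>a\<bar> \<le> 1"
    by (simp add: t_def)
  finally have "0 \<le> 1 - t * a"
    by simp
  moreover have "0 \<le> - (t * \<beta>)"
    using \<open>0 < t\<close> assms(5) by (simp add: mult_nonneg_nonpos)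
  ultimately have "(1 - t * a) *\<^sub>R x + (- (t * \<beta>)) *\<^sub>R h \<in> C"
    using assms(1-3) by (intro convex_cone_add convex_cone_scaleR)
  moreover have "x - t *\<^sub>R g = (1 - t * a) *\<^sub>R x + (- (t * \<beta>)) *\<^sub>R h"
    using assms(4) by (simp add: algebra_simps)
  ultimately have "x - t *\<^sub>R g \<in> C"
    by (simp only:)
  then show ?thesis
    using \<open>0 < t\<close> by blast
qed

lemma neg_mem_cone_at:
  fixes B :: "'a::euclidean_space set"
  assumes "finite B" "\<forall>w. (\<forall>c\<in>B. 0 \<le> w \<bullet> (c - b)) \<longrightarrow> w \<bullet> g = 0"
  shows "- g \<in> cone_at B b"
proof (rule ccontr)
  assume "- g \<notin> cone_at B b"
  then obtain w where "w \<bullet> (- g) < 0" "\<forall>c\<in>B. 0 \<le> w \<bullet> (c - b)"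
    using cone_at_separation[OF assms(1)] by blast
  then show False
    using assms(2)[rule_format, of w] by simp
qed

lemma planar_cone_decomposition:
  fixes B :: "(real^2) set"
  assumes "finite B" "x \<in> cone_at B b" "x \<noteq> 0"
    and H: "\<forall>w. (\<forall>c\<in>B. 0 \<le> w \<bullet> (c - b)) \<longrightarrow> w \<bullet> x = 0 \<longrightarrow> w \<bullet> g = 0"
  shows "\<exists>h\<in>cone_at B b. \<exists>a \<beta>. \<beta> \<le> 0 \<and> g = a *\<^sub>R x + \<beta> *\<^sub>R h"
proof (cases "cross2 x g = 0")
  case True
  then have "g = ((x \<bullet> g) / (x \<bullet> x)) *\<^sub>R x + 0 *\<^sub>R x"
    using cross2_eq_0_imp_multiple assms(3) by simp
  then show ?thesis
    using assms(2) by blast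
next
  case False
  define w where "w = cross2 x g *\<^sub>R (vector [- x$2, x$1] :: real^2)"
  have w: "w \<bullet> v = cross2 x g * cross2 x v" for v
    unfolding w_def by (simp add: inner_vec2 cross2_def algebra_simps)
  have "w \<bullet> x = 0" "w \<bullet> g \<noteq> 0"
    using False by (simp_all add: w)
  then obtain c where "c \<in> B" "w \<bullet> (c - b) < 0"
    using H by (meson not_le)
  define h where "h = c - b"
  have "h \<in> cone_at B b"
    unfolding h_def using assms(1) \<open>c \<in> B\<close> by (rule cone_at_generator)
  have opposite: "cross2 x g * cross2 x h < 0"
    using \<open>w \<bullet> (c - b) < 0\<close> by (simp add: w h_def)
  then have "cross2 x h \<noteq> 0"
    by auto
  have "g = inverse (cross2 x h) *\<^sub>R (cross2 x h *\<^sub>R g)"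
    using \<open>cross2 x h \<noteq> 0\<close> by simp
  also have "\<dots> = (cross2 g h / cross2 x h) *\<^sub>R x + (cross2 x g / cross2 x h) *\<^sub>R h"
    unfolding cross2_cramer[of x h g] by (simp add: scaleR_add_right divide_inverse mult.commute)
  finally have "g = (cross2 g h / cross2 x h) *\<^sub>R x + (cross2 x g / cross2 x h) *\<^sub>R h" .
  moreover have "cross2 x g / cross2 x h \<le> 0"
    using opposite by (auto simp: divide_le_0_iff mult_less_0_iff)
  ultimately show ?thesis
    using \<open>h \<in> cone_at B b\<close> by blast
qed

lemma conic_support_iff:
  fixes B :: "(real^2) set"
  assumes "finite B" "x \<in> cone_at B b" "c \<in> B"
  shows "conic_support B b x c \<longleftrightarrow>
    (\<forall>w. (\<forall>c'\<in>B. 0 \<le> w \<bullet> (c' - b)) \<longrightarrow> w \<bullet> x = 0 \<longrightarrow> w \<bullet> (c - b) = 0)"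
proof
  assume "conic_support B b x c"
  then show "\<forall>w. (\<forall>c'\<in>B. 0 \<le> w \<bullet> (c' - b)) \<longrightarrow> w \<bullet> x = 0 \<longrightarrow> w \<bullet> (c - b) = 0"
    using conic_support_orthogonal[OF assms(1) _ assms(3)] by blast
next
  assume H: "\<forall>w. (\<forall>c'\<in>B. 0 \<le> w \<bullet> (c' - b)) \<longrightarrow> w \<bullet> x = 0 \<longrightarrow> w \<bullet> (c - b) = 0"
  have "\<exists>t>0. x - t *\<^sub>R (c - b) \<in> cone_at B b"
  proof (cases "x = 0")
    case True
    then have "- (c - b) \<in> cone_at B b"
      using H by (intro neg_mem_cone_at[OF assms(1)]) simp
    then show ?thesis
      using True by (intro exI[of _ 1]) simp
  next
    case False
    then obtain h a \<beta> where "h \<in> cone_at B b" "\<beta> \<le> 0" "c - b = a *\<^sub>R x + \<beta> *\<^sub>R h"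
      using planar_cone_decomposition[OF assms(1,2) False H] by blast
    then show ?thesis
      using convex_cone_diff_small_multiple[OF convex_cone_cone_at assms(2)] by blast
  qed
  then show "conic_support B b x c"
    using conic_supportI[OF assms(1,3)] by blast
qed

section \<open>Periodic rotations in the plane\<close>

lemma funpow_cycle_in_finite:
  assumes "finite X" "f ` X \<subseteq> X" "x \<in> X"
  shows "\<exists>y\<in>X. \<exists>p>0. (f ^^ p) y = y"
proof -
  have orbit: "(f ^^ k) x \<in> X" for k
    using assms(2,3) by (induction k) auto
  have "\<not> inj_on (\<lambda>k. (f ^^ k) x) {..card X}"
  proof
    assume "inj_on (\<lambda>k. (f ^^ k) x) {..card X}"
    then have "card {..card X} \<le> card X"
      using orbit assms(1) by (intro card_inj_on_le) auto
    then show False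
      by simp
  qed
  then obtain i j where "i < j" "(f ^^ i) x = (f ^^ j) x"
    unfolding inj_on_def by (metis linorder_neqE_nat)
  have "(f ^^ (j - i)) ((f ^^ i) x) = (f ^^ (j - i + i)) x"
    by (simp add: funpow_add)
  also have "\<dots> = (f ^^ i) x"
    using \<open>i < j\<close> \<open>(f ^^ i) x = (f ^^ j) x\<close> by simp
  finally have "(f ^^ (j - i)) ((f ^^ i) x) = (f ^^ i) x" .
  then show ?thesis
    using orbit \<open>i < j\<close> by (intro bexI[of _ "(f ^^ i) x"] exI[of _ "j - i"]) auto
qed

lemma periodic_add_mult:
  fixes k m p :: nat
  assumes "\<forall>k. f (k + p) = f k"
  shows "f (k + m * p) = f k"
proof (induction m)
  case (Suc m)
  have "k + Suc m * p = (k + m * p) + p"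
    by (simp add: algebra_simps)
  then show ?case
    using Suc assms by (simp only:)
qed simp

lemma periodic_forward_invariant:
  assumes "0 < p" "\<forall>k. P (k + p) = P k" "\<forall>k. P k \<longrightarrow> P (Suc k)"
  shows "(\<forall>k. P k) \<or> (\<forall>k. \<not> P k)"
proof (cases "\<exists>j. P j")
  case True
  then obtain j where "P j"
    by blast
  have "P m" if "j \<le> m" for m
    using that \<open>P j\<close> assms(3) by (induction m rule: dec_induct) auto
  moreover have "j \<le> k + j * p" for k
  proof -
    have "j \<le> j * p"
      using assms(1) by (simp add: Suc_le_eq)
    then show ?thesis
      by linarith
  qed
  ultimately have "P k" for k
    using periodic_add_mult[of P p k j] assms(2) by simp
  then show ?thesis
    by blast
qed simp

lemma consecutive_products_pos_imp_same_sign: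
  fixes c :: "nat \<Rightarrow> real"
  assumes "\<forall>k. 0 < c k * c (Suc k)"
  shows "(\<forall>k. 0 < c k) \<or> (\<forall>k. c k < 0)"
proof -
  have "0 < c k \<longleftrightarrow> 0 < c (Suc k)" for k
    using assms[rule_format, of k] by (auto simp: zero_less_mult_iff)
  then have "0 < c k \<longleftrightarrow> 0 < c 0" for k
    by (induction k) auto
  moreover have "c k \<noteq> 0" for k
    using assms[rule_format, of k] by auto
  ultimately show ?thesis
    by (metis linorder_neqE_linordered_idom)
qed

lemma cross2_cone_cover:
  assumes "0 < cross2 a b" "0 \<le> cross2 a z" "0 \<le> cross2 z b"
  shows "\<exists>\<alpha> \<beta>. 0 \<le> \<alpha> \<and> 0 \<le> \<beta> \<and> z = \<alpha> *\<^sub>R a + \<beta> *\<^sub>R b"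
proof -
  have "z = inverse (cross2 a b) *\<^sub>R (cross2 a b *\<^sub>R z)"
    using assms(1) by simp
  also have "\<dots> = (cross2 z b / cross2 a b) *\<^sub>R a + (cross2 a z / cross2 a b) *\<^sub>R b"
    unfolding cross2_cramer[of a b z] by (simp add: scaleR_add_right divide_inverse mult.commute)
  finally show ?thesis
    using assms by (intro exI[of _ "cross2 z b / cross2 a b"] exI[of _ "cross2 a z / cross2 a b"]) simp
qed

lemma cross2_cot_decreasing:
  assumes "0 < cross2 u v" "0 < cross2 z u * cross2 z v" "z \<noteq> 0"
  shows "(z \<bullet> v) / cross2 z v < (z \<bullet> u) / cross2 z u"
proof -
  have "cross2 z u \<noteq> 0" "cross2 z v \<noteq> 0"
    using assms(2) by auto
  then have "(z \<bullet> u) / cross2 z u - (z \<bullet> v) / cross2 z v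
      = ((z \<bullet> u) * cross2 z v - (z \<bullet> v) * cross2 z u) / (cross2 z u * cross2 z v)"
    by (rule diff_frac_eq)
  also have "\<dots> = (z \<bullet> z) * cross2 u v / (cross2 z u * cross2 z v)"
    by (simp only: cross2_inner_identity)
  also have "\<dots> > 0"
    using assms by simp
  finally show ?thesis
    by simp
qed

lemma periodic_rotation_covers_pos:
  fixes ws :: "nat \<Rightarrow> real^2"
  assumes p: "0 < p" "\<forall>k. ws (k + p) = ws k"
    and turn: "\<forall>k. 0 < cross2 (ws k) (ws (Suc k))" and "z \<noteq> 0"
  shows "\<exists>k \<alpha> \<beta>. 0 \<le> \<alpha> \<and> 0 \<le> \<beta> \<and> z = \<alpha> *\<^sub>R ws k + \<beta> *\<^sub>R ws (Suc k)"
proof (rule ccontr)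
  assume uncovered: "\<not> ?thesis"
  define f where "f k = cross2 z (ws k)" for k
  have "f k \<le> 0 \<longrightarrow> f (Suc k) \<le> 0" for k
  proof (intro impI, rule ccontr)
    assume "f k \<le> 0" "\<not> f (Suc k) \<le> 0"
    then have "0 \<le> cross2 (ws k) z" "0 \<le> cross2 z (ws (Suc k))"
      by (simp_all add: f_def cross2_antisym[of "ws k"])
    then show False
      using cross2_cone_cover[OF turn[rule_format, of k]] uncovered by blast
  qed
  then have signs: "(\<forall>k. f k \<le> 0) \<or> (\<forall>k. 0 < f k)"
    using periodic_forward_invariant[OF p(1), of "\<lambda>k. f k \<le> 0"] p(2)
    by (simp add: f_def not_le)
  have nonzero: "f k \<noteq> 0" for k
  proof
    assume "f k = 0"
    define s where "s = (ws k \<bullet> z) / (ws k \<bullet> ws k)"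
    have "ws k \<noteq> 0"
      using turn[rule_format, of k] by (auto simp: cross2_def)
    then have z: "z = s *\<^sub>R ws k"
      using cross2_eq_0_imp_multiple \<open>f k = 0\<close> by (simp add: s_def f_def cross2_antisym[of z])
    have "s < 0"
      using uncovered z by (metis add.right_neutral not_le order_refl scaleR_zero_left)
    define j where "j = k + p - 1"
    have "ws (Suc j) = ws k"
      using p by (simp add: j_def)
    then have "0 < f j"
      using \<open>s < 0\<close> turn[rule_format, of j]
      by (simp add: f_def z cross2_antisym[of "ws k"] mult_neg_pos)
    then show False
      using signs \<open>f k = 0\<close> by (metis less_irrefl not_le)
  qed
  (* g k is the cotangent of the angle from z to ws k *)
  define g where "g k = (z \<bullet> ws k) / f k" for k
  have "g (Suc k) < g k" for k
  proof -
    have "0 < f k * f (Suc k)"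
      using signs
    proof
      assume "\<forall>k. f k \<le> 0"
      then have "f k < 0" "f (Suc k) < 0"
        using nonzero[of k] nonzero[of "Suc k"] by (auto simp: le_less)
      then show ?thesis
        by (simp add: mult_neg_neg)
    qed simp
    then show ?thesis
      unfolding g_def f_def using turn \<open>z \<noteq> 0\<close> by (intro cross2_cot_decreasing) auto
  qed
  then have "g p < g 0"
    using lift_Suc_mono_less[of "\<lambda>k. - g k" 0 p] p(1) by simp
  moreover have "g p = g 0"
    using p(2)[rule_format, of 0] by (simp add: g_def f_def)
  ultimately show False
    by simp
qed

definition reflect2 :: "real^2 \<Rightarrow> real^2" where
  "reflect2 v = vector [v$1, - v$2]"

lemma reflect2_components [simp]: "reflect2 v $ 1 = v $ 1" "reflect2 v $ 2 = - v $ 2"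
  by (simp_all add: reflect2_def)

lemma reflect2_reflect2 [simp]: "reflect2 (reflect2 v) = v"
  by (rule vec2_eqI) simp_all

lemma reflect2_eq_0_iff [simp]: "reflect2 v = 0 \<longleftrightarrow> v = 0"
  by (metis reflect2_components vec2_eqI zero_index neg_equal_0_iff_equal)

lemma reflect2_combination: "reflect2 (\<alpha> *\<^sub>R a + \<beta> *\<^sub>R b) = \<alpha> *\<^sub>R reflect2 a + \<beta> *\<^sub>R reflect2 b"
  by (rule vec2_eqI) simp_all

lemma cross2_reflect2: "cross2 (reflect2 a) (reflect2 b) = - cross2 a b"
  by (simp add: cross2_def)

lemma periodic_rotation_covers:
  fixes ws :: "nat \<Rightarrow> real^2"
  assumes p: "0 < p" "\<forall>k. ws (k + p) = ws k"
    and turn: "(\<forall>k. 0 < cross2 (ws k) (ws (Suc k))) \<or> (\<forall>k. cross2 (ws k) (ws (Suc k)) < 0)"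
    and "z \<noteq> 0"
  shows "\<exists>k \<alpha> \<beta>. 0 \<le> \<alpha> \<and> 0 \<le> \<beta> \<and> z = \<alpha> *\<^sub>R ws k + \<beta> *\<^sub>R ws (Suc k)"
  using turn
proof
  assume "\<forall>k. 0 < cross2 (ws k) (ws (Suc k))"
  then show ?thesis
    by (rule periodic_rotation_covers_pos[OF p _ \<open>z \<noteq> 0\<close>])
next
  assume "\<forall>k. cross2 (ws k) (ws (Suc k)) < 0"
  then obtain k \<alpha> \<beta> where "0 \<le> \<alpha>" "0 \<le> \<beta>"
    and "reflect2 z = \<alpha> *\<^sub>R reflect2 (ws k) + \<beta> *\<^sub>R reflect2 (ws (Suc k))"
    using periodic_rotation_covers_pos[of p "\<lambda>k. reflect2 (ws k)" "reflect2 z"] p \<open>z \<noteq> 0\<close>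
    by (auto simp: cross2_reflect2)
  then have "reflect2 (reflect2 z) = \<alpha> *\<^sub>R ws k + \<beta> *\<^sub>R ws (Suc k)"
    by (simp only: reflect2_combination reflect2_reflect2)
  then show ?thesis
    using \<open>0 \<le> \<alpha>\<close> \<open>0 \<le> \<beta>\<close> by auto
qed

section \<open>Inward fields on planar point sets\<close>

(* In the application B is the set of extreme source complexes and n x the net reaction vector
   at x. *)
locale planar_inward_field =
  fixes B :: "(real^2) set" and n :: "real^2 \<Rightarrow> real^2"
  assumes finite_B: "finite B"
    and field_nonzero: "x \<in> B \<Longrightarrow> n x \<noteq> 0"
    and field_in_cone: "x \<in> B \<Longrightarrow> n x \<in> cone_at B x"
    and field_inward: "w \<noteq> 0 \<Longrightarrow> \<exists>u\<in>B. (\<forall>c\<in>B. w \<bullet> u \<le> w \<bullet> c) \<and> 0 < w \<bullet> n u"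
    and points_exposed: "y \<in> B \<Longrightarrow> \<exists>w. w \<noteq> 0 \<and> (\<forall>c\<in>B. w \<bullet> y \<le> w \<bullet> c)"
begin

definition support_graph :: "2 reaction set" where
  "support_graph = {(x, c). x \<in> B \<and> c \<in> B \<and> c \<noteq> x \<and> conic_support B x (n x) c}"

definition exposes :: "(real^2) set \<Rightarrow> real^2 \<Rightarrow> real^2 \<Rightarrow> bool" where
  "exposes X x w \<longleftrightarrow> w \<noteq> 0 \<and> w \<bullet> n x = 0 \<and> (\<forall>c\<in>B. w \<bullet> x \<le> w \<bullet> c) \<and>
     (\<forall>c\<in>B. w \<bullet> c = w \<bullet> x \<longrightarrow> c \<in> X)"

lemma support_graph_out_edge:
  assumes "x \<in> B"
  shows "\<exists>c. (x, c) \<in> support_graph"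
proof -
  obtain l where l: "conic_coeffs B x (n x) l"
    using field_in_cone[OF assms] unfolding cone_at_def by blast
  then obtain c where "c \<in> B" "l c *\<^sub>R (c - x) \<noteq> 0"
    using field_nonzero[OF assms] sum.neutral unfolding conic_coeffs_def by (metis (no_types, lifting))
  then have "0 < l c" "c \<noteq> x"
    using l by (auto simp: conic_coeffs_def order_le_less)
  then have "conic_support B x (n x) c"
    using l unfolding conic_support_def by blast
  then show ?thesis
    using assms \<open>c \<in> B\<close> \<open>c \<noteq> x\<close> unfolding support_graph_def by blast
qed

lemma exposing_direction_of_unsupported:
  assumes "x \<in> B" "c \<in> B" "\<not> conic_support B x (n x) c"
  shows "\<exists>w. w \<noteq> 0 \<and> w \<bullet> n x = 0 \<and> (\<forall>c'\<in>B. w \<bullet> x \<le> w \<bullet> c') \<and>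
             (\<forall>c'\<in>B. w \<bullet> c' = w \<bullet> x \<longrightarrow> conic_support B x (n x) c')"
proof -
  note support_iff = conic_support_iff[OF finite_B field_in_cone[OF assms(1)]]
  obtain w where w: "\<forall>c'\<in>B. 0 \<le> w \<bullet> (c' - x)" "w \<bullet> n x = 0" "w \<bullet> (c - x) \<noteq> 0"
    using assms(3) support_iff[OF assms(2)] by blast
  have "w \<noteq> 0"
    using w(3) by auto
  moreover have "\<forall>c'\<in>B. w \<bullet> x \<le> w \<bullet> c'"
    using w(1) by (simp add: inner_diff_right)
  moreover have "conic_support B x (n x) c'" if "c' \<in> B" "w \<bullet> c' = w \<bullet> x" for c'
    unfolding support_iff[OF that(1)]
  proof (intro allI impI)
    fix w' assume w': "\<forall>c''\<in>B. 0 \<le> w' \<bullet> (c'' - x)" "w' \<bullet> n x = 0"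
    have "cross2 w w' = 0"
      using w(2) w'(2) field_nonzero[OF assms(1)] by (rule cross2_eq_0_if_orthogonal)
    from arg_cong[OF cross2_eq_0_imp_parallel[OF this], of "\<lambda>v. v \<bullet> (c' - x)"]
    have "(w \<bullet> w) * (w' \<bullet> (c' - x)) = (w \<bullet> w') * (w \<bullet> (c' - x))"
      by simp
    also have "w \<bullet> (c' - x) = 0"
      using that(2) by (simp add: inner_diff_right)
    finally show "w' \<bullet> (c' - x) = 0"
      using \<open>w \<noteq> 0\<close> by simp
  qed
  ultimately show ?thesis
    using w(2) by blast
qed

lemma exposes_next:
  assumes "exposes X x w" "x \<in> B"
  shows "\<exists>u\<in>X. w \<bullet> u = w \<bullet> x \<and> 0 < w \<bullet> n u"
proof -
  have "w \<noteq> 0"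
    using assms(1) by (simp add: exposes_def)
  then obtain u where u: "u \<in> B" "\<forall>c\<in>B. w \<bullet> u \<le> w \<bullet> c" "0 < w \<bullet> n u"
    using field_inward by blast
  have "w \<bullet> x \<le> w \<bullet> u"
    using assms(1) u(1) by (simp add: exposes_def)
  then have "w \<bullet> u = w \<bullet> x"
    using u(2) assms(2) by (simp add: order.antisym)
  then show ?thesis
    using u assms(1) unfolding exposes_def by blast
qed

lemma exposing_walk:
  assumes "X \<subseteq> B" "x0 \<in> X" "\<forall>x\<in>X. \<exists>w. exposes X x w"
  obtains ys ws p where "0 < p" "\<forall>k. ys (k + p) = ys k" "\<forall>k. ws (k + p) = ws k"
    "\<forall>k. ys k \<in> X" "\<forall>k. exposes X (ys k) (ws k)"
    "\<forall>k. ws k \<bullet> ys (Suc k) = ws k \<bullet> ys k" "\<forall>k. 0 < ws k \<bullet> n (ys (Suc k))"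
proof -
  define W where "W x = (SOME w. exposes X x w)" for x
  have W: "exposes X x (W x)" if "x \<in> X" for x
    unfolding W_def using assms(3) that by (blast intro: someI_ex)
  define f where "f x = (SOME u. u \<in> X \<and> W x \<bullet> u = W x \<bullet> x \<and> 0 < W x \<bullet> n u)" for x
  have f: "f x \<in> X \<and> W x \<bullet> f x = W x \<bullet> x \<and> 0 < W x \<bullet> n (f x)" if "x \<in> X" for x
  proof -
    have "\<exists>u. u \<in> X \<and> W x \<bullet> u = W x \<bullet> x \<and> 0 < W x \<bullet> n u"
      using exposes_next[OF W[OF that]] that assms(1) by blast
    then show ?thesis
      unfolding f_def by (rule someI_ex)
  qed
  then have "f ` X \<subseteq> X"
    by blast
  then obtain y p where "y \<in> X" "0 < p" "(f ^^ p) y = y"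
    using funpow_cycle_in_finite[OF finite_subset[OF assms(1) finite_B] _ assms(2)] by blast
  define ys where "ys k = (f ^^ k) y" for k
  have ys_X: "ys k \<in> X" for k
    unfolding ys_def using \<open>y \<in> X\<close> \<open>f ` X \<subseteq> X\<close> by (induction k) auto
  have ys_periodic: "ys (k + p) = ys k" for k
    unfolding ys_def by (simp add: funpow_add \<open>(f ^^ p) y = y\<close>)
  have ys_Suc: "ys (Suc k) = f (ys k)" for k
    by (simp add: ys_def)
  show ?thesis
  proof (rule that[of p ys "\<lambda>k. W (ys k)"])
    show "0 < p"
      by fact
    show "\<forall>k. ys (k + p) = ys k" "\<forall>k. W (ys (k + p)) = W (ys k)"
      by (simp_all add: ys_periodic)
    show "\<forall>k. ys k \<in> X" "\<forall>k. exposes X (ys k) (W (ys k))"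
      using W ys_X by blast+
    show "\<forall>k. W (ys k) \<bullet> ys (Suc k) = W (ys k) \<bullet> ys k"
      "\<forall>k. 0 < W (ys k) \<bullet> n (ys (Suc k))"
      using f[OF ys_X] by (simp_all add: ys_Suc)
  qed
qed

lemma exposing_walk_rotates:
  assumes walk: "\<forall>k. ys k \<in> B" "\<forall>k. exposes X (ys k) (ws k)"
    "\<forall>k. ws k \<bullet> ys (Suc k) = ws k \<bullet> ys k" "\<forall>k. 0 < ws k \<bullet> n (ys (Suc k))"
  shows "(\<forall>k. 0 < cross2 (ws k) (ws (Suc k))) \<or> (\<forall>k. cross2 (ws k) (ws (Suc k)) < 0)"
proof -
  have ws: "ws k \<noteq> 0" "ws k \<bullet> n (ys k) = 0" "\<forall>c\<in>B. ws k \<bullet> ys k \<le> ws k \<bullet> c" for k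
    using walk(2) by (simp_all add: exposes_def)
  have turn: "cross2 (ws k) (ws (Suc k)) \<noteq> 0" for k
    using walk(4)[rule_format, of k] ws(1,2)[of "Suc k"]
    by (intro cross2_neq_0I[of _ "n (ys (Suc k))"]) auto
  have "0 < cross2 (ws k) (ws (Suc k)) * cross2 (ws (Suc k)) (ws (Suc (Suc k)))" for k
  proof (rule cross2_consecutive_same_sign)
    define d where "d = ys (Suc (Suc k)) - ys (Suc k)"
    have "d \<noteq> 0"
      using walk(4)[rule_format, of "Suc k"] ws(2)[of "Suc k"] by (auto simp: d_def)
    show "ws (Suc k) \<noteq> 0" "ws (Suc k) \<bullet> d = 0"
      using ws(1) walk(3) by (simp_all add: d_def inner_diff_right)
    have "0 \<le> ws k \<bullet> d"
      using ws(3) walk(1,3) by (simp add: d_def inner_diff_right)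
    moreover have "ws k \<bullet> d \<noteq> 0"
      using turn cross2_eq_0_if_orthogonal \<open>ws (Suc k) \<bullet> d = 0\<close> \<open>d \<noteq> 0\<close> by blast
    ultimately show "0 < ws k \<bullet> d"
      by simp
    have "ws (Suc (Suc k)) \<bullet> d \<le> 0"
      using ws(3) walk(1) by (simp add: d_def inner_diff_right)
    moreover have "ws (Suc (Suc k)) \<bullet> d \<noteq> 0"
      using turn[of "Suc k"] cross2_eq_0_if_orthogonal \<open>ws (Suc k) \<bullet> d = 0\<close> \<open>d \<noteq> 0\<close> by blast
    ultimately show "ws (Suc (Suc k)) \<bullet> d < 0"
      by simp
  qed
  then show ?thesis
    using consecutive_products_pos_imp_same_sign[of "\<lambda>k. cross2 (ws k) (ws (Suc k))"] by simp
qed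

lemma exposing_directions_cover:
  assumes "X \<subseteq> B" "X \<noteq> {}" "\<forall>x\<in>X. \<exists>w. exposes X x w"
  shows "B \<subseteq> X"
proof
  fix y assume "y \<in> B"
  obtain x0 where "x0 \<in> X"
    using assms(2) by blast
  obtain ys ws p where p: "0 < p" "\<forall>k. ys (k + p) = ys k" "\<forall>k. ws (k + p) = ws k"
    and walk: "\<forall>k. ys k \<in> X" "\<forall>k. exposes X (ys k) (ws k)"
      "\<forall>k. ws k \<bullet> ys (Suc k) = ws k \<bullet> ys k" "\<forall>k. 0 < ws k \<bullet> n (ys (Suc k))"
    using exposing_walk[OF assms(1) \<open>x0 \<in> X\<close> assms(3)] by metis
  have ys_B: "\<forall>k. ys k \<in> B"
    using walk(1) assms(1) by blast
  obtain z where z: "z \<noteq> 0" "\<forall>c\<in>B. z \<bullet> y \<le> z \<bullet> c"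
    using points_exposed[OF \<open>y \<in> B\<close>] by blast
  (* the exposing directions turn monotonically and periodically, so z lies between two
     consecutive ones *)
  obtain k \<alpha> \<beta> where "0 \<le> \<alpha>" "0 \<le> \<beta>" and z_eq: "z = \<alpha> *\<^sub>R ws k + \<beta> *\<^sub>R ws (Suc k)"
    using periodic_rotation_covers[OF p(1,3) exposing_walk_rotates[OF ys_B walk(2-4)] z(1)] by blast
  have face: "\<forall>c\<in>B. ws j \<bullet> c = ws j \<bullet> ys j \<longrightarrow> c \<in> X" "\<forall>c\<in>B. ws j \<bullet> ys j \<le> ws j \<bullet> c" for j
    using walk(2) by (simp_all add: exposes_def)
  define x' where "x' = ys (Suc k)"
  have u1: "ws k \<bullet> x' \<le> ws k \<bullet> y" and u2: "ws (Suc k) \<bullet> x' \<le> ws (Suc k) \<bullet> y"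
    using face(2) walk(3) \<open>y \<in> B\<close> by (simp_all add: x'_def)
  have "z \<bullet> y \<le> z \<bullet> x'"
    using z(2) ys_B by (simp add: x'_def)
  then have "\<alpha> * (ws k \<bullet> y - ws k \<bullet> x') + \<beta> * (ws (Suc k) \<bullet> y - ws (Suc k) \<bullet> x') \<le> 0"
    unfolding z_eq by (simp add: inner_add_left algebra_simps)
  moreover have "0 \<le> \<alpha> * (ws k \<bullet> y - ws k \<bullet> x')" "0 \<le> \<beta> * (ws (Suc k) \<bullet> y - ws (Suc k) \<bullet> x')"
    using \<open>0 \<le> \<alpha>\<close> \<open>0 \<le> \<beta>\<close> u1 u2 by simp_all
  ultimately have "\<alpha> * (ws k \<bullet> y - ws k \<bullet> x') = 0" "\<beta> * (ws (Suc k) \<bullet> y - ws (Suc k) \<bullet> x') = 0"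
    by linarith+
  moreover have "\<alpha> \<noteq> 0 \<or> \<beta> \<noteq> 0"
    using z(1) z_eq by auto
  ultimately have "ws k \<bullet> y = ws k \<bullet> ys k \<or> ws (Suc k) \<bullet> y = ws (Suc k) \<bullet> ys (Suc k)"
    using walk(3) by (auto simp: x'_def)
  then show "y \<in> X"
    using face(1) \<open>y \<in> B\<close> by blast
qed

theorem support_graph_strongly_connected:
  assumes "x \<in> B" "y \<in> B"
  shows "(x, y) \<in> support_graph\<^sup>*"
proof (rule ccontr)
  assume "(x, y) \<notin> support_graph\<^sup>*"
  define X where "X = {c\<in>B. (x, c) \<in> support_graph\<^sup>*}"
  have "y \<notin> X"
    using \<open>(x, y) \<notin> support_graph\<^sup>*\<close> by (simp add: X_def)
  have closed: "c \<in> X" if "x' \<in> X" "(x', c) \<in> support_graph" for x' c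
    using that unfolding X_def support_graph_def by (auto intro: rtrancl_into_rtrancl)
  have "\<exists>w. exposes X x' w" if "x' \<in> X" for x'
  proof -
    have "x' \<in> B" "y \<noteq> x'"
      using that \<open>y \<notin> X\<close> by (auto simp: X_def)
    then have "\<not> conic_support B x' (n x') y"
      using closed[OF that] \<open>y \<in> B\<close> \<open>y \<notin> X\<close> unfolding support_graph_def by blast
    then obtain w where w: "w \<noteq> 0" "w \<bullet> n x' = 0" "\<forall>c\<in>B. w \<bullet> x' \<le> w \<bullet> c"
      "\<forall>c\<in>B. w \<bullet> c = w \<bullet> x' \<longrightarrow> conic_support B x' (n x') c"
      using exposing_direction_of_unsupported[OF \<open>x' \<in> B\<close> \<open>y \<in> B\<close>] by blast
    have "c \<in> X" if "c \<in> B" "w \<bullet> c = w \<bullet> x'" for c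
      using closed[OF \<open>x' \<in> X\<close>, of c] \<open>x' \<in> X\<close> w(4) that \<open>x' \<in> B\<close>
      unfolding support_graph_def by (cases "c = x'") auto
    then show ?thesis
      using w unfolding exposes_def by blast
  qed
  moreover have "X \<subseteq> B" "X \<noteq> {}"
    using assms(1) by (auto simp: X_def)
  ultimately have "B \<subseteq> X"
    using exposing_directions_cover by blast
  then show False
    using \<open>y \<in> B\<close> \<open>y \<notin> X\<close> by blast
qed

lemma weakly_reversible_support_graph: "weakly_reversible support_graph"
  unfolding weakly_reversible_def
  using support_graph_strongly_connected by (auto simp: support_graph_def)

end

section \<open>Net reaction vectors\<close>

definition net_vector :: "('n::finite) reaction set \<Rightarrow> ('n reaction \<Rightarrow> real) \<Rightarrow> real^'n \<Rightarrow> real^'n" where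
  "net_vector E K b = (\<Sum>e\<in>{e\<in>E. fst e = b}. K e *\<^sub>R rvec e)"

lemma gen_system_by_source:
  assumes "finite E"
  shows "gen_system E K x = (\<Sum>b\<in>source_complexes E. monom x b *\<^sub>R net_vector E K b)"
proof -
  have "gen_system E K x = (\<Sum>b\<in>fst ` E. \<Sum>e\<in>{e\<in>E. fst e = b}. (K e * monom x (fst e)) *\<^sub>R rvec e)"
    unfolding gen_system_def by (rule sum.image_gen[OF assms])
  also have "\<dots> = (\<Sum>b\<in>fst ` E. monom x b *\<^sub>R net_vector E K b)"
    unfolding net_vector_def scaleR_sum_right by (intro sum.cong refl) (simp add: mult.commute)
  finally show ?thesis
    by (simp add: source_complexes_def)
qed

lemma net_vector_cong:
  "(\<And>e. e \<in> E \<Longrightarrow> fst e = b \<Longrightarrow> K e = K' e) \<Longrightarrow> net_vector E K b = net_vector E K' b"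
  unfolding net_vector_def by (intro sum.cong) auto

lemma inner_net_vector_nonneg:
  assumes "rate_constants E K" "\<forall>e\<in>E. fst e = b \<longrightarrow> 0 \<le> w \<bullet> rvec e"
  shows "0 \<le> w \<bullet> net_vector E K b"
  using assms unfolding net_vector_def rate_constants_def
  by (auto simp: inner_sum_right intro!: sum_nonneg)

lemma inner_net_vector_eq_0_iff:
  assumes "finite E" "rate_constants E K" "\<forall>e\<in>E. fst e = b \<longrightarrow> 0 \<le> w \<bullet> rvec e"
  shows "w \<bullet> net_vector E K b = 0 \<longleftrightarrow> (\<forall>e\<in>E. fst e = b \<longrightarrow> w \<bullet> rvec e = 0)"
proof -
  have pos: "0 < K e" if "e \<in> E" for e
    using assms(2) that by (simp add: rate_constants_def)
  then have nz: "K e \<noteq> 0" if "e \<in> E" for e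
    using that by (metis less_irrefl)
  have "w \<bullet> net_vector E K b = (\<Sum>e\<in>{e\<in>E. fst e = b}. K e * (w \<bullet> rvec e))"
    by (simp add: net_vector_def inner_sum_right)
  also have "\<dots> = 0 \<longleftrightarrow> (\<forall>e\<in>{e\<in>E. fst e = b}. K e * (w \<bullet> rvec e) = 0)"
    using assms(1,3) pos by (intro sum_nonneg_eq_0_iff) (auto simp: less_imp_le)
  finally show ?thesis
    using nz by auto
qed

lemma strongly_endotactic_minimal_source:
  assumes "strongly_endotactic E" "\<forall>s\<in>source_complexes E. w \<bullet> b \<le> w \<bullet> s" "e \<in> E" "fst e = b"
  shows "0 \<le> w \<bullet> rvec e"
proof (rule ccontr)
  assume "\<not> 0 \<le> w \<bullet> rvec e"
  then obtain e' where "e' \<in> E" "w \<bullet> (fst e' - fst e) < 0"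
    using assms(1,3) unfolding strongly_endotactic_def by (meson not_le)
  moreover have "w \<bullet> b \<le> w \<bullet> fst e'"
    using assms(2) \<open>e' \<in> E\<close> by (simp add: source_complexes_def)
  ultimately show False
    using assms(4) by (simp add: inner_diff_right)
qed

lemma minimizer_in_frontier_convex_hull:
  fixes S :: "'a::euclidean_space set"
  assumes "w \<noteq> 0" "u \<in> S" "\<forall>s\<in>S. w \<bullet> u \<le> w \<bullet> s"
  shows "u \<in> frontier (convex hull S)"
proof -
  have "convex hull S \<subseteq> {p. w \<bullet> u \<le> w \<bullet> p}"
    using assms(3) by (intro hull_minimal) (auto simp: convex_halfspace_ge)
  then have "interior (convex hull S) \<subseteq> interior {p. w \<bullet> u \<le> w \<bullet> p}"
    by (rule interior_mono)
  also have "\<dots> = {p. w \<bullet> u < w \<bullet> p}"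
    using assms(1) by simp
  finally have "u \<notin> interior (convex hull S)"
    by auto
  moreover have "u \<in> closure (convex hull S)"
    using assms(2) by (intro closure_subset[THEN subsetD] hull_inc)
  ultimately show ?thesis
    by (simp add: frontier_def)
qed

lemma frontier_convex_hull_exposed:
  fixes S :: "'a::euclidean_space set"
  assumes "finite S" "y \<in> S" "y \<in> frontier (convex hull S)"
  shows "\<exists>w. w \<noteq> 0 \<and> (\<forall>c\<in>S. w \<bullet> y \<le> w \<bullet> c)"
proof (cases "affine hull (convex hull S) = UNIV")
  case True
  have "closure (convex hull S) = convex hull S"
    using assms(1) by (simp add: compact_imp_closed finite_imp_compact_convex_hull)
  then have y: "y \<in> closure (convex hull S)" "y \<notin> rel_interior (convex hull S)"
    using assms(3) rel_interior_interior[OF True] by (auto simp: frontier_def)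
  obtain w where "w \<noteq> 0" and w: "\<And>p. p \<in> closure (convex hull S) \<Longrightarrow> w \<bullet> y \<le> w \<bullet> p"
    by (rule supporting_hyperplane_relative_frontier[OF convex_convex_hull y]) blast
  have "w \<bullet> y \<le> w \<bullet> c" if "c \<in> S" for c
    using that by (intro w closure_subset[THEN subsetD] hull_inc)
  then show ?thesis
    using \<open>w \<noteq> 0\<close> by blast
next
  case False
  then have "aff_dim (convex hull S) < DIM('a)"
    using aff_dim_le_DIM[of "convex hull S"] by (simp add: aff_dim_eq_full order_less_le)
  then obtain w r where "w \<noteq> 0" and hyperplane: "convex hull S \<subseteq> {x. w \<bullet> x = r}"
    by (rule aff_lowdim_subset_hyperplane)
  have "w \<bullet> c = r" if "c \<in> S" for c
    using hyperplane hull_inc[where P = convex, OF that] by blast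
  then show ?thesis
    using \<open>w \<noteq> 0\<close> assms(2) by (intro exI[of _ w]) simp
qed

lemma minimal_on_frontier_imp_minimal:
  fixes S :: "'a::euclidean_space set"
  assumes "finite S" "b \<in> S" "\<forall>c\<in>S \<inter> frontier (convex hull S). w \<bullet> b \<le> w \<bullet> c"
  shows "\<forall>s\<in>S. w \<bullet> b \<le> w \<bullet> s"
proof (cases "w = 0")
  case False
  obtain s0 where "s0 \<in> S" "\<forall>s\<in>S. w \<bullet> s0 \<le> w \<bullet> s"
    using ex_is_arg_min_if_finite[OF assms(1), of "\<lambda>s. w \<bullet> s"] assms(2)
    by (auto simp: is_arg_min_linorder)
  then have "w \<bullet> b \<le> w \<bullet> s0"
    using assms(3) minimizer_in_frontier_convex_hull[OF False] by blast
  then show ?thesis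
    using \<open>\<forall>s\<in>S. w \<bullet> s0 \<le> w \<bullet> s\<close> by force
qed simp

section \<open>Planar strongly endotactic networks\<close>

locale planar_strongly_endotactic =
  fixes E :: "2 reaction set"
  assumes network: "reaction_network E"
    and endotactic: "strongly_endotactic E"
    and full_dim: "dim (stoich_subspace E) = 2"
begin

abbreviation SC :: "(real^2) set" where
  "SC \<equiv> source_complexes E"

abbreviation EC :: "(real^2) set" where
  "EC \<equiv> extreme_complexes E"

lemma finite_reactions: "finite E"
  using network by (simp add: reaction_network_def)

lemma finite_SC: "finite SC"
  by (simp add: source_complexes_def finite_reactions)

lemma EC_subset_SC: "EC \<subseteq> SC"
  by (auto simp: extreme_complexes_def)

lemma finite_EC: "finite EC"
  using finite_subset[OF EC_subset_SC finite_SC] .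

lemma rvec_nonzero: "e \<in> E \<Longrightarrow> rvec e \<noteq> 0"
  using network by (auto simp: reaction_network_def rvec_def)

lemma reaction_vector_not_orthogonal:
  assumes "w \<noteq> 0"
  shows "\<exists>e\<in>E. w \<bullet> rvec e \<noteq> 0"
proof (rule ccontr)
  assume "\<not> (\<exists>e\<in>E. w \<bullet> rvec e \<noteq> 0)"
  then have orth: "\<And>y. y \<in> rvec ` E \<Longrightarrow> orthogonal w y"
    by (auto simp: orthogonal_def)
  have "dim (rvec ` E) = DIM(real^2)"
    using full_dim by (simp add: stoich_subspace_def)
  then have "span (rvec ` E) = UNIV"
    using dim_eq_full by blast
  then have "orthogonal w w"
    using orthogonal_to_span[OF _ orth] by blast
  then show False
    using assms by (simp add: orthogonal_def)
qed

lemma minimal_source_with_increasing_reaction: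
  assumes "w \<noteq> 0"
  shows "\<exists>u\<in>SC. (\<forall>s\<in>SC. w \<bullet> u \<le> w \<bullet> s) \<and> (\<exists>e\<in>E. fst e = u \<and> 0 < w \<bullet> rvec e)"
proof -
  obtain e0 where "e0 \<in> E" "w \<bullet> rvec e0 \<noteq> 0"
    using reaction_vector_not_orthogonal[OF assms] by blast
  have "\<exists>e1\<in>E. w \<bullet> rvec e1 < 0"
  proof (cases "w \<bullet> rvec e0 < 0")
    case False
    then have "(- w) \<bullet> rvec e0 < 0"
      using \<open>w \<bullet> rvec e0 \<noteq> 0\<close> by simp
    then obtain e1 where "e1 \<in> E" "0 < (- w) \<bullet> rvec e1"
      using endotactic \<open>e0 \<in> E\<close> unfolding strongly_endotactic_def by blast
    then show ?thesis
      by auto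
  qed (use \<open>e0 \<in> E\<close> in blast)
  then obtain e where "e \<in> E" "0 < w \<bullet> rvec e" "\<forall>e'\<in>E. w \<bullet> (fst e - fst e') \<le> 0"
    using endotactic unfolding strongly_endotactic_def by blast
  then show ?thesis
    by (intro bexI[of _ "fst e"]) (auto simp: source_complexes_def inner_diff_right)
qed

lemma minimal_on_EC_imp_minimal:
  assumes "b \<in> EC" "\<forall>c\<in>EC. w \<bullet> b \<le> w \<bullet> c"
  shows "\<forall>s\<in>SC. w \<bullet> b \<le> w \<bullet> s"
  using minimal_on_frontier_imp_minimal[OF finite_SC, of b w] assms
  by (simp add: extreme_complexes_def)

lemma minimal_source_reactions_nonneg:
  assumes "b \<in> EC" "\<forall>c\<in>EC. 0 \<le> w \<bullet> (c - b)"
  shows "\<forall>e\<in>E. fst e = b \<longrightarrow> 0 \<le> w \<bullet> rvec e"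
  using strongly_endotactic_minimal_source[OF endotactic minimal_on_EC_imp_minimal[OF assms(1)]]
    assms(2) by (simp add: inner_diff_right)

lemma net_vector_in_cone_at:
  assumes "rate_constants E K" "b \<in> EC"
  shows "net_vector E K b \<in> cone_at EC b"
proof (rule ccontr)
  assume "net_vector E K b \<notin> cone_at EC b"
  then obtain w where "w \<bullet> net_vector E K b < 0" "\<forall>c\<in>EC. 0 \<le> w \<bullet> (c - b)"
    using cone_at_separation[OF finite_EC] by blast
  moreover from this(2) have "0 \<le> w \<bullet> net_vector E K b"
    by (intro inner_net_vector_nonneg[OF assms(1)] minimal_source_reactions_nonneg[OF assms(2)])
  ultimately show False
    by simp
qed

lemma net_vector_inward:
  assumes "rate_constants E K" "w \<noteq> 0"
  shows "\<exists>u\<in>EC. (\<forall>c\<in>EC. w \<bullet> u \<le> w \<bullet> c) \<and> 0 < w \<bullet> net_vector E K u"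
proof -
  obtain u e where u: "u \<in> SC" "\<forall>s\<in>SC. w \<bullet> u \<le> w \<bullet> s" and e: "e \<in> E" "fst e = u" "0 < w \<bullet> rvec e"
    using minimal_source_with_increasing_reaction[OF assms(2)] by blast
  have "u \<in> EC"
    using minimizer_in_frontier_convex_hull[OF assms(2) u] u(1) by (simp add: extreme_complexes_def)
  have nonneg: "\<forall>e\<in>E. fst e = u \<longrightarrow> 0 \<le> w \<bullet> rvec e"
    using strongly_endotactic_minimal_source[OF endotactic u(2)] by blast
  have "0 \<le> w \<bullet> net_vector E K u"
    by (rule inner_net_vector_nonneg[OF assms(1) nonneg])
  moreover have "w \<bullet> net_vector E K u \<noteq> 0"
    using inner_net_vector_eq_0_iff[OF finite_reactions assms(1) nonneg] e by auto
  ultimately show ?thesis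
    using \<open>u \<in> EC\<close> u(2) EC_subset_SC by (intro bexI[of _ u]) auto
qed

lemma conic_support_net_vector_iff:
  assumes "rate_constants E K" "rate_constants E K'" "b \<in> EC" "c \<in> EC"
  shows "conic_support EC b (net_vector E K b) c \<longleftrightarrow> conic_support EC b (net_vector E K' b) c"
proof -
  have "w \<bullet> net_vector E K b = 0 \<longleftrightarrow> w \<bullet> net_vector E K' b = 0"
    if "\<forall>c'\<in>EC. 0 \<le> w \<bullet> (c' - b)" for w
    using inner_net_vector_eq_0_iff[OF finite_reactions assms(1)]
      inner_net_vector_eq_0_iff[OF finite_reactions assms(2)]
      minimal_source_reactions_nonneg[OF assms(3) that] by simp
  then show ?thesis
    unfolding conic_support_iff[OF finite_EC net_vector_in_cone_at[OF assms(1,3)] assms(4)]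
      conic_support_iff[OF finite_EC net_vector_in_cone_at[OF assms(2,3)] assms(4)]
    by blast
qed

lemma ex_rates_net_vector_nonzero:
  assumes "b \<in> SC"
  shows "\<exists>K. (\<forall>e. 0 < K e) \<and> net_vector E K b \<noteq> 0"
proof (cases "net_vector E (\<lambda>e. 1) b = 0")
  case True
  obtain e0 where "e0 \<in> E" "fst e0 = b"
    using assms by (auto simp: source_complexes_def)
  define K where "K e = (if e = e0 then 2 else 1 :: real)" for e :: "2 reaction"
  have "K e *\<^sub>R rvec e = 1 *\<^sub>R rvec e + (if e = e0 then rvec e0 else 0)" for e
    by (simp add: K_def scaleR_2)
  then have "net_vector E K b = net_vector E (\<lambda>e. 1) b + rvec e0"
    unfolding net_vector_def using finite_reactions \<open>e0 \<in> E\<close> \<open>fst e0 = b\<close>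
    by (simp add: sum.distrib sum.delta)
  then have "net_vector E K b \<noteq> 0"
    using True rvec_nonzero[OF \<open>e0 \<in> E\<close>] by simp
  then show ?thesis
    by (intro exI[of _ K]) (simp add: K_def)
qed (rule exI[of _ "\<lambda>_. 1"], simp)

(* By conic_support_net_vector_iff the support graph does not depend on the rate constants;
   nonzero net vectors are needed only for field_nonzero. *)
definition reference_rates :: "2 reaction \<Rightarrow> real" where
  "reference_rates e = (SOME K. (\<forall>e. 0 < K e) \<and> net_vector E K (fst e) \<noteq> 0) e"

lemma reference_rates_at_source:
  assumes "b \<in> SC"
  defines "K \<equiv> SOME K. (\<forall>e. 0 < K e) \<and> net_vector E K b \<noteq> 0"
  shows "\<forall>e. 0 < K e" "net_vector E K b \<noteq> 0" "fst e = b \<Longrightarrow> reference_rates e = K e"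
proof -
  have "(\<forall>e. 0 < K e) \<and> net_vector E K b \<noteq> 0"
    unfolding K_def by (rule someI_ex[OF ex_rates_net_vector_nonzero[OF assms(1)]])
  then show "\<forall>e. 0 < K e" "net_vector E K b \<noteq> 0"
    by simp_all
  show "reference_rates e = K e" if "fst e = b"
    using that by (simp add: reference_rates_def K_def)
qed

lemma rate_constants_reference_rates: "rate_constants E reference_rates"
  unfolding rate_constants_def
proof
  fix e assume "e \<in> E"
  then have "fst e \<in> SC"
    by (simp add: source_complexes_def)
  then show "0 < reference_rates e"
    using reference_rates_at_source(1)[OF \<open>fst e \<in> SC\<close>]
      reference_rates_at_source(3)[OF \<open>fst e \<in> SC\<close> refl] by (simp only:)
qed

lemma net_vector_reference_rates_nonzero:
  assumes "b \<in> SC"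
  shows "net_vector E reference_rates b \<noteq> 0"
proof -
  note K = reference_rates_at_source[OF assms]
  have "net_vector E reference_rates b
      = net_vector E (SOME K. (\<forall>e. 0 < K e) \<and> net_vector E K b \<noteq> 0) b"
    by (rule net_vector_cong) (rule K(3))
  then show ?thesis
    using K(2) by simp
qed

sublocale extreme: planar_inward_field EC "net_vector E reference_rates"
proof
  show "finite EC"
    by (rule finite_EC)
  show "net_vector E reference_rates x \<noteq> 0" if "x \<in> EC" for x
    using net_vector_reference_rates_nonzero EC_subset_SC that by blast
  show "net_vector E reference_rates x \<in> cone_at EC x" if "x \<in> EC" for x
    using rate_constants_reference_rates that by (rule net_vector_in_cone_at)
  show "\<exists>u\<in>EC. (\<forall>c\<in>EC. w \<bullet> u \<le> w \<bullet> c) \<and> 0 < w \<bullet> net_vector E reference_rates u" if "w \<noteq> 0" for w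
    using rate_constants_reference_rates that by (rule net_vector_inward)
  show "\<exists>w. w \<noteq> 0 \<and> (\<forall>c\<in>EC. w \<bullet> y \<le> w \<bullet> c)" if "y \<in> EC" for y
    using frontier_convex_hull_exposed[OF finite_SC, of y] that EC_subset_SC
    by (auto simp: extreme_complexes_def)
qed

definition inner_reactions :: "2 reaction set" where
  "inner_reactions = {e\<in>E. fst e \<notin> EC}"

definition realizing_network :: "2 reaction set" where
  "realizing_network = extreme.support_graph \<union> inner_reactions"

lemma support_graph_subset: "extreme.support_graph \<subseteq> EC \<times> EC"
  by (auto simp: extreme.support_graph_def)

lemma support_graph_endpoints:
  assumes "e \<in> extreme.support_graph"
  shows "fst e \<in> EC" "snd e \<in> EC"
  using assms support_graph_subset by (auto simp: mem_Times_iff)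

lemma finite_realizing_network: "finite realizing_network"
  using finite_subset[OF support_graph_subset] finite_EC finite_reactions
  by (simp add: realizing_network_def inner_reactions_def)

lemma source_complexes_realizing_network: "source_complexes realizing_network = SC"
proof
  have "fst ` extreme.support_graph \<subseteq> SC"
    using support_graph_endpoints(1) EC_subset_SC by blast
  moreover have "fst ` inner_reactions \<subseteq> SC"
    by (auto simp: inner_reactions_def source_complexes_def)
  ultimately show "source_complexes realizing_network \<subseteq> SC"
    by (simp add: source_complexes_def realizing_network_def image_Un)
  show "SC \<subseteq> source_complexes realizing_network"
  proof
    fix s assume "s \<in> SC"
    show "s \<in> source_complexes realizing_network"
    proof (cases "s \<in> EC")
      case True
      then obtain c where "(s, c) \<in> extreme.support_graph"
        using extreme.support_graph_out_edge by blast
      then show ?thesis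
        by (force simp: source_complexes_def realizing_network_def)
    next
      case False
      then show ?thesis
        using \<open>s \<in> SC\<close> by (force simp: source_complexes_def realizing_network_def inner_reactions_def)
    qed
  qed
qed

lemma extremal_reactions_realizing_network:
  "extremal_reactions realizing_network = extreme.support_graph"
proof -
  have "extreme_complexes realizing_network = EC"
    by (simp add: extreme_complexes_def source_complexes_realizing_network)
  then show ?thesis
    using support_graph_endpoints(1)
    by (auto simp: extremal_reactions_def realizing_network_def inner_reactions_def)
qed

lemma reaction_network_realizing_network: "reaction_network realizing_network"
proof -
  have "realizing_network \<noteq> {}"
    using source_complexes_realizing_network network
    by (auto simp: reaction_network_def source_complexes_def)
  moreover have "fst e \<noteq> snd e \<and> nonneg_vec (fst e) \<and> nonneg_vec (snd e)" if "e \<in> realizing_network" for e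
  proof (cases "e \<in> E")
    case False
    then have "e \<in> extreme.support_graph"
      using that by (simp add: realizing_network_def inner_reactions_def)
    then have "fst e \<noteq> snd e" "fst e \<in> SC" "snd e \<in> SC"
      using support_graph_subset EC_subset_SC by (auto simp: extreme.support_graph_def)
    then show ?thesis
      using network by (auto simp: reaction_network_def source_complexes_def)
  qed (use network in \<open>simp add: reaction_network_def\<close>)
  ultimately show ?thesis
    using finite_realizing_network by (simp add: reaction_network_def)
qed

definition cone_weights :: "(2 reaction \<Rightarrow> real) \<Rightarrow> real^2 \<Rightarrow> real^2 \<Rightarrow> real" where
  "cone_weights K b = (SOME l. conic_coeffs EC b (net_vector E K b) l \<and>
     (\<forall>c\<in>EC. 0 < l c \<longleftrightarrow> conic_support EC b (net_vector E K b) c))"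

lemma cone_weights_coeffs:
  assumes "rate_constants E K" "b \<in> EC"
  shows "\<forall>c. 0 \<le> cone_weights K b c"
    and "net_vector E K b = (\<Sum>c\<in>EC. cone_weights K b c *\<^sub>R (c - b))"
    and "c \<in> EC \<Longrightarrow> 0 < cone_weights K b c \<longleftrightarrow> conic_support EC b (net_vector E K b) c"
  using someI_ex[OF conic_coeffs_exact_support[OF finite_EC net_vector_in_cone_at[OF assms]]]
  unfolding cone_weights_def conic_coeffs_def by blast+

definition realizing_rates :: "(2 reaction \<Rightarrow> real) \<Rightarrow> 2 reaction \<Rightarrow> real" where
  "realizing_rates K e = (if e \<in> extreme.support_graph then cone_weights K (fst e) (snd e) else K e)"

lemma support_graph_iff_cone_weights:
  assumes "rate_constants E K"
  shows "(b, c) \<in> extreme.support_graph \<longleftrightarrow>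
    b \<in> EC \<and> c \<in> EC \<and> c \<noteq> b \<and> 0 < cone_weights K b c"
  using conic_support_net_vector_iff[OF assms rate_constants_reference_rates] cone_weights_coeffs(3)[OF assms]
  by (auto simp: extreme.support_graph_def)

lemma rate_constants_realizing_rates:
  assumes "rate_constants E K"
  shows "rate_constants realizing_network (realizing_rates K)"
  using assms support_graph_iff_cone_weights[OF assms]
  by (auto simp: rate_constants_def realizing_rates_def realizing_network_def inner_reactions_def)

lemma net_vector_realizing_rates:
  assumes "rate_constants E K" "b \<in> SC"
  shows "net_vector realizing_network (realizing_rates K) b = net_vector E K b"
proof (cases "b \<in> EC")
  case True
  define C where "C = {c\<in>EC. c \<noteq> b \<and> 0 < cone_weights K b c}"
  have "{e\<in>realizing_network. fst e = b} = Pair b ` C"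
    using True support_graph_iff_cone_weights[OF assms(1)]
    by (auto simp: C_def realizing_network_def inner_reactions_def)
  then have "net_vector realizing_network (realizing_rates K) b = (\<Sum>c\<in>C. cone_weights K b c *\<^sub>R (c - b))"
    using support_graph_iff_cone_weights[OF assms(1)] True
    by (simp add: net_vector_def sum.reindex inj_on_def rvec_def realizing_rates_def C_def)
  also have "\<dots> = (\<Sum>c\<in>EC. cone_weights K b c *\<^sub>R (c - b))"
    using cone_weights_coeffs(1)[OF assms(1) True] finite_EC
    by (intro sum.mono_neutral_left) (auto simp: C_def order_le_less)
  also have "\<dots> = net_vector E K b"
    using cone_weights_coeffs(2)[OF assms(1) True] by simp
  finally show ?thesis .
next
  case False
  then have "{e\<in>realizing_network. fst e = b} = {e\<in>E. fst e = b}"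
    using support_graph_subset by (auto simp: realizing_network_def inner_reactions_def)
  moreover have "realizing_rates K e = K e" if "fst e = b" for e
    using False that support_graph_subset by (auto simp: realizing_rates_def)
  ultimately show ?thesis
    unfolding net_vector_def by (intro sum.cong) auto
qed

lemma gen_system_realizing_rates:
  assumes "rate_constants E K"
  shows "gen_system realizing_network (realizing_rates K) = gen_system E K"
  using net_vector_realizing_rates[OF assms]
  by (simp add: fun_eq_iff gen_system_by_source finite_reactions finite_realizing_network
      source_complexes_realizing_network)

end

theorem theorem5:
  fixes E :: "2 reaction set"
  assumes "reaction_network E"
    and "strongly_endotactic E"
    and "dim (stoich_subspace E) = 2"
  shows "((\<forall>s\<in>source_complexes E. s \<in> frontier (convex hull (source_complexes E))) \<longrightarrow>
            (\<exists>E'. reaction_network E' \<and> weakly_reversible E' \<and> realized_by E E'))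
         \<and> effectively_extremally_wr E"
proof -
  interpret planar_strongly_endotactic E
    using assms by unfold_locales
  have realized: "realized_by E realizing_network"
    unfolding realized_by_def
    using rate_constants_realizing_rates gen_system_realizing_rates by metis
  have "extremally_weakly_reversible realizing_network"
    unfolding extremally_weakly_reversible_def extremal_reactions_realizing_network
    by (rule extreme.weakly_reversible_support_graph)
  then have "effectively_extremally_wr E"
    unfolding effectively_extremally_wr_def system_extremally_wr_def
    using reaction_network_realizing_network rate_constants_realizing_rates
      gen_system_realizing_rates by metis
  moreover have "realizing_network = extreme.support_graph"
    if "\<forall>s\<in>SC. s \<in> frontier (convex hull SC)"
    using that by (auto simp: realizing_network_def inner_reactions_def extreme_complexes_def
        source_complexes_def)
  ultimately show ?thesis
    using reaction_network_realizing_network extreme.weakly_reversible_support_graph realized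
    by metis
qed

end
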